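(* Let $M=\mathbb{R}/\mathbb{Z}$, let $f_0:M\to M$ be a saddle-node circle homeomorphism, let $(f_t)_{t\in[0,1]}$ be a continuous one-parameter family of circle homeomorphisms (with $f_t$ at $t=0$ equal to $f_0$), and let $(\theta_\varepsilon)_{\varepsilon>0}$ be probability measures on the parameter space $[0,1]$ with $\theta_\varepsilon\to\delta_0$ in the weak$^*$ topology as $\varepsilon\to0$. If for every $\varepsilon$ close to $0$ one chooses an $\varepsilon$-stationary probability measure $\mu^\varepsilon$, then every weak$^*$ accumulation point $\mu$ of $(\mu^\varepsilon)$ as $\varepsilon\to0$ equals the Dirac mass $\delta_0$.
   Context: A homeomorphism $f_0:M\to M$ is a saddle-node circle homeomorphism if $f_0(0)=0$, $f_0(x)\neq x$ for all $x\neq0$, and $f_0(x)>x$ for all $x\in V\setminus\{0\}$ for some open neighborhood $V$ of $0$. A probability measure $\mu$ on $M$ is $\varepsilon$-stationary if $\int\varphi\,d\mu=\iint\varphi(f_t(x))\,d\mu(x)\,d\theta_\varepsilon(t)$ for every continuous $\varphi:M\to\mathbb{R}$. *)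

theory Defs
  imports "HOL-Analysis.Analysis" "HOL-Probability.Probability"
begin

text \<open>The circle M = R/Z is modelled as the unit circle of the complex plane,
  via the homeomorphism [s] \<mapsto> exp(2 pi i s); the point 0 of R/Z is the point 1.\<close>

abbreviation circle :: "complex set" where
  "circle \<equiv> sphere 0 1"

abbreviation circle_borel :: "complex measure" where
  "circle_borel \<equiv> restrict_space borel circle"

abbreviation param_borel :: "real measure" where
  "param_borel \<equiv> restrict_space borel {0..1}"

definition circle_homeo :: "(complex \<Rightarrow> complex) \<Rightarrow> bool" where
  "circle_homeo f \<longleftrightarrow> (\<exists>g. homeomorphism circle circle f g)"

text \<open>For points x close to 1 and y close to x, "y > x" on R/Z means that
  the small representative of y - x is positive, i.e. Arg (y / x) > 0.\<close>
definition saddle_node :: "(complex \<Rightarrow> complex) \<Rightarrow> bool" where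
  "saddle_node f0 \<longleftrightarrow> circle_homeo f0 \<and> f0 1 = 1 \<and>
     (\<forall>x\<in>circle. x \<noteq> 1 \<longrightarrow> f0 x \<noteq> x) \<and>
     (\<exists>V. open V \<and> 1 \<in> V \<and> (\<forall>x\<in>V \<inter> circle. x \<noteq> 1 \<longrightarrow> Arg (f0 x / x) > 0))"

definition prob_on_circle :: "complex measure \<Rightarrow> bool" where
  "prob_on_circle \<mu> \<longleftrightarrow> prob_space \<mu> \<and> sets \<mu> = sets circle_borel"

definition prob_on_param :: "real measure \<Rightarrow> bool" where
  "prob_on_param \<theta> \<longleftrightarrow> prob_space \<theta> \<and> sets \<theta> = sets param_borel"

definition stationary :: "(real \<Rightarrow> complex \<Rightarrow> complex) \<Rightarrow> real measure \<Rightarrow> complex measure \<Rightarrow> bool" where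
  "stationary f \<theta> \<mu> \<longleftrightarrow>
     (\<forall>\<phi> :: complex \<Rightarrow> real. continuous_on circle \<phi> \<longrightarrow>
        (\<integral>x. \<phi> x \<partial>\<mu>) = (\<integral>t. (\<integral>x. \<phi> (f t x) \<partial>\<mu>) \<partial>\<theta>))"

definition weak_star_conv :: "(nat \<Rightarrow> complex measure) \<Rightarrow> complex measure \<Rightarrow> bool" where
  "weak_star_conv \<mu>s \<nu> \<longleftrightarrow>
     (\<forall>\<phi> :: complex \<Rightarrow> real. continuous_on circle \<phi> \<longrightarrow>
        (\<lambda>n. \<integral>x. \<phi> x \<partial>(\<mu>s n)) \<longlonglongrightarrow> (\<integral>x. \<phi> x \<partial>\<nu>))"

end

theory Submission
  imports Defs
begin

text \<open>The accumulation point \<open>\<nu>\<close> is invariant under \<open>f\<^sub>0\<close>: by stationarity,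
  \<open>\<integral>\<phi> d\<mu>\<^sup>\<epsilon>\<close> is the \<open>\<theta>\<^sub>\<epsilon>\<close>-average over \<open>t\<close> of \<open>\<integral>\<phi>\<circ>f\<^sub>t d\<mu>\<^sup>\<epsilon>\<close>, and since \<open>\<theta>\<^sub>\<epsilon>\<close>
  concentrates at \<open>0\<close> while \<open>(t, x) \<mapsto> \<phi> (f\<^sub>t x)\<close> is uniformly continuous, this average is
  within \<open>o(1)\<close> of \<open>\<integral>\<phi>\<circ>f\<^sub>0 d\<mu>\<^sup>\<epsilon>\<close>. On the complement of its unique fixed point the
  homeomorphism \<open>f\<^sub>0\<close> lifts to a fixed-point-free self-map of the interval \<open>(0, 2\<pi>)\<close>, whose
  orbits are monotone and hence tend to an endpoint; so every \<open>f\<^sub>0\<close>-orbit tends to the fixed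
  point, and dominated convergence gives \<open>\<integral>\<phi> d\<nu> = \<integral>\<phi>\<circ>f\<^sub>0\<^sup>n d\<nu> \<rightarrow> \<phi> 1\<close>.\<close>

lemma fixed_point_free_one_side:
  fixes G :: "real \<Rightarrow> real"
  assumes cont: "continuous_on {a<..<b} G" and nofix: "\<And>t. t \<in> {a<..<b} \<Longrightarrow> G t \<noteq> t"
  shows "(\<forall>t\<in>{a<..<b}. t < G t) \<or> (\<forall>t\<in>{a<..<b}. G t < t)"
proof (rule ccontr)
  assume "\<not> ?thesis"
  then obtain u v where uv: "u \<in> {a<..<b}" "v \<in> {a<..<b}" "G u \<le> u" "v \<le> G v"
    by (auto simp: not_less)
  have gap_cont: "continuous_on {min u v..max u v} (\<lambda>t. G t - t)"
    using uv by (intro continuous_intros continuous_on_subset[OF cont]) auto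
  then have "\<exists>t. min u v \<le> t \<and> t \<le> max u v \<and> G t - t = 0"
  proof (cases "u \<le> v")
    case True
    then show ?thesis
      using uv IVT'[of "\<lambda>t. G t - t" u 0 v] gap_cont by auto
  next
    case False
    then show ?thesis
      using uv IVT2'[of "\<lambda>t. G t - t" u 0 v] gap_cont by auto
  qed
  then obtain t where t: "min u v \<le> t" "t \<le> max u v" "G t = t"
    by auto
  then have "t \<in> {a<..<b}"
    using uv by (auto simp: min_le_iff_disj le_max_iff_disj)
  with nofix t show False by blast
qed

lemma orbit_limit_is_fixed_point:
  fixes G :: "'a::t2_space \<Rightarrow> 'a"
  assumes "isCont G L" and "(\<lambda>n. (G^^n) t) \<longlonglongrightarrow> L"
  shows "G L = L"
proof -
  have "(\<lambda>n. G ((G^^n) t)) \<longlonglongrightarrow> G L"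
    using assms by (rule isCont_tendsto_compose)
  moreover have "(\<lambda>n. G ((G^^n) t)) \<longlonglongrightarrow> L"
    using LIMSEQ_Suc[OF assms(2)] by simp
  ultimately show ?thesis
    using LIMSEQ_unique by blast
qed

lemma fixed_point_free_orbit_tendsto_endpoint:
  fixes G :: "real \<Rightarrow> real"
  assumes cont: "continuous_on {a<..<b} G" and maps: "G ` {a<..<b} \<subseteq> {a<..<b}"
    and nofix: "\<And>t. t \<in> {a<..<b} \<Longrightarrow> G t \<noteq> t" and t: "t \<in> {a<..<b}"
  shows "(\<lambda>n. (G^^n) t) \<longlonglongrightarrow> a \<or> (\<lambda>n. (G^^n) t) \<longlonglongrightarrow> b"
proof -
  define x where "x = (\<lambda>n. (G^^n) t)"
  have x: "x n \<in> {a<..<b}" for n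
    unfolding x_def by (induction n) (use t maps in \<open>auto simp: image_subset_iff\<close>)
  have fixed: "G L = L" if "x \<longlonglongrightarrow> L" "L \<in> {a<..<b}" for L
  proof (rule orbit_limit_is_fixed_point)
    show "isCont G L"
      using cont that(2) by (simp add: continuous_on_eq_continuous_at)
    show "(\<lambda>n. (G^^n) t) \<longlonglongrightarrow> L"
      using that(1) by (simp add: x_def)
  qed
  have x_Suc: "x (Suc n) = G (x n)" for n
    by (simp add: x_def)
  from fixed_point_free_one_side[OF cont nofix] show ?thesis
  proof
    assume up: "\<forall>t\<in>{a<..<b}. t < G t"
    have "incseq x"
      using up x x_Suc by (intro incseq_SucI) (simp add: less_imp_le)
    then obtain L where L: "x \<longlonglongrightarrow> L"
      using x incseq_convergent[of x b] by (meson greaterThanLessThan_iff less_imp_le)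
    have "x 0 \<le> L" "L \<le> b"
      using \<open>incseq x\<close> L x by (auto intro: incseq_le LIMSEQ_le_const2 less_imp_le)
    moreover have "L \<notin> {a<..<b}"
      using fixed[OF L] up by force
    ultimately have "L = b"
      using x[of 0] by auto
    with L show ?thesis by (simp add: x_def)
  next
    assume down: "\<forall>t\<in>{a<..<b}. G t < t"
    have "decseq x"
      using down x x_Suc by (intro decseq_SucI) (simp add: less_imp_le)
    then obtain L where L: "x \<longlonglongrightarrow> L"
      using x decseq_convergent[of x a] by (meson greaterThanLessThan_iff less_imp_le)
    have "L \<le> x 0" "a \<le> L"
      using \<open>decseq x\<close> L x by (auto intro: decseq_ge LIMSEQ_le_const less_imp_le)
    moreover have "L \<notin> {a<..<b}"
      using fixed[OF L] down by force
    ultimately have "L = a"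
      using x[of 0] by auto
    with L show ?thesis by (simp add: x_def)
  qed
qed

lemma Arg2pi_circle_minus_one:
  assumes "z \<in> circle - {1}"
  shows "Arg2pi z \<in> {0<..<2*pi}" and "exp (\<i> * of_real (Arg2pi z)) = z"
proof -
  show "exp (\<i> * of_real (Arg2pi z)) = z"
    using assms complex_norm_eq_1_exp by auto
  have "z \<notin> \<real>\<^sub>\<ge>\<^sub>0"
    using assms by (auto simp: complex_nonneg_Reals_iff complex_eq_iff cmod_eq_Re)
  then have "Arg2pi z \<noteq> 0"
    by (auto simp: Arg2pi_eq_0 complex_nonneg_Reals_iff complex_is_Real_iff)
  then show "Arg2pi z \<in> {0<..<2*pi}"
    using Arg2pi[of z] by auto
qed

lemma exp_circle_minus_one:
  assumes "t \<in> {0<..<2*pi}"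
  shows "exp (\<i> * of_real t) \<in> circle - {1}" and "Arg2pi (exp (\<i> * of_real t)) = t"
proof -
  show "Arg2pi (exp (\<i> * of_real t)) = t"
    using assms by (subst Arg2pi_exp) auto
  moreover have "Arg2pi 1 = 0"
    by (simp add: Arg2pi_eq_0)
  ultimately show "exp (\<i> * of_real t) \<in> circle - {1}"
    using assms by (auto simp: norm_exp_i_times)
qed

lemma circle_orbit_tendsto_unique_fixed_point:
  fixes g :: "complex \<Rightarrow> complex"
  assumes cont: "continuous_on circle g" and maps: "g ` circle \<subseteq> circle"
    and inj: "inj_on g circle" and fixed: "g 1 = 1"
    and nofix: "\<And>x. x \<in> circle \<Longrightarrow> x \<noteq> 1 \<Longrightarrow> g x \<noteq> x" and x: "x \<in> circle"
  shows "(\<lambda>n. (g^^n) x) \<longlonglongrightarrow> 1"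
proof (cases "x = 1")
  case True
  have "(g^^n) 1 = 1" for n
    by (induction n) (simp_all add: fixed)
  with True show ?thesis by simp
next
  case False
  define P where "P = (\<lambda>t::real. exp (\<i> * of_real t))"
  define G where "G = (\<lambda>t. Arg2pi (g (P t)))"
  have g_arc: "g z \<in> circle - {1}" if "z \<in> circle - {1}" for z
    using that maps inj_onD[OF inj, of z 1] fixed by (force simp: image_subset_iff)
  have P_arc: "P t \<in> circle - {1}" "Arg2pi (P t) = t" if "t \<in> {0<..<2*pi}" for t
    using exp_circle_minus_one[OF that] by (simp_all add: P_def)
  have G_maps: "G ` {0<..<2*pi} \<subseteq> {0<..<2*pi}"
    using Arg2pi_circle_minus_one(1) g_arc P_arc by (auto simp: G_def)
  have G_nofix: "G t \<noteq> t" if "t \<in> {0<..<2*pi}" for t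
  proof
    assume "G t = t"
    then have "g (P t) = P t"
      using Arg2pi_circle_minus_one(2)[OF g_arc[OF P_arc(1)[OF that]]] by (simp add: G_def P_def)
    with nofix P_arc(1)[OF that] show False by auto
  qed
  have G_cont: "continuous_on {0<..<2*pi} G"
  proof -
    have "continuous_on (circle - {1}) Arg2pi"
      by (intro continuous_at_imp_continuous_on ballI continuous_at_Arg2pi)
        (auto simp: complex_nonneg_Reals_iff complex_eq_iff cmod_eq_Re)
    moreover have "continuous_on {0<..<2*pi} (\<lambda>t. g (P t))"
      using P_arc by (auto simp: P_def intro!: continuous_intros continuous_on_compose2[OF cont])
    moreover have "(\<lambda>t. g (P t)) ` {0<..<2*pi} \<subseteq> circle - {1}"
      using g_arc P_arc by auto
    ultimately show ?thesis
      unfolding G_def by (rule continuous_on_compose2)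
  qed
  define \<theta> where "\<theta> = Arg2pi x"
  have \<theta>: "\<theta> \<in> {0<..<2*pi}" and P_\<theta>: "P \<theta> = x"
    using Arg2pi_circle_minus_one[of x] x False by (auto simp: \<theta>_def P_def)
  have G_orbit: "(G^^n) \<theta> \<in> {0<..<2*pi}" for n
    by (induction n) (use \<theta> G_maps in \<open>auto simp: image_subset_iff\<close>)
  have P_G: "P (G s) = g (P s)" if "s \<in> {0<..<2*pi}" for s
    using Arg2pi_circle_minus_one(2)[OF g_arc[OF P_arc(1)[OF that]]] by (simp add: G_def P_def)
  have orbit_lift: "(g^^n) x = P ((G^^n) \<theta>)" for n
  proof (induction n)
    case (Suc n)
    then show ?case
      using P_G[OF G_orbit[of n]] by simp
  qed (simp add: P_\<theta>)
  have "P 0 = 1" "P (2*pi) = 1"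
    by (simp_all add: P_def exp_eq_1)
  moreover have "(\<lambda>n. P ((G^^n) \<theta>)) \<longlonglongrightarrow> P L" if "(\<lambda>n. (G^^n) \<theta>) \<longlonglongrightarrow> L" for L
    unfolding P_def by (intro tendsto_intros that)
  ultimately show ?thesis
    using fixed_point_free_orbit_tendsto_endpoint[OF G_cont G_maps G_nofix \<theta>]
    unfolding orbit_lift by metis
qed

lemma space_eq_if_sets_restrict_borel:
  "sets M = sets (restrict_space borel S) \<Longrightarrow> space M = S"
  by (metis sets_eq_imp_space_eq space_restrict_space space_borel Int_UNIV_right)

lemma borel_measurable_continuous_on_sets_restrict:
  fixes F :: "'a::topological_space \<Rightarrow> 'b::topological_space"
  assumes "sets M = sets (restrict_space borel S)" and "continuous_on S F"
  shows "F \<in> borel_measurable M"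
  using borel_measurable_continuous_on_restrict[OF assms(2)] measurable_cong_sets[OF assms(1) refl]
  by blast

lemma integrable_continuous_on_compact:
  fixes F :: "'a::topological_space \<Rightarrow> 'b::{banach, second_countable_topology}"
  assumes "finite_measure M" and sets: "sets M = sets (restrict_space borel S)"
    and "compact S" and cont: "continuous_on S F"
  shows "integrable M F"
proof -
  interpret finite_measure M by fact
  obtain B where "\<And>x. x \<in> S \<Longrightarrow> norm (F x) \<le> B"
    using continuous_on_compact_bound[OF \<open>compact S\<close> cont] by blast
  then show ?thesis
    using space_eq_if_sets_restrict_borel[OF sets]
    by (intro integrable_const_bound[where B = B] AE_I2
        borel_measurable_continuous_on_sets_restrict[OF sets cont]) auto
qed

lemma (in prob_space) abs_integral_diff_le_integral:
  fixes f g b :: "'a \<Rightarrow> real"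
  assumes "integrable M f" "integrable M g" "integrable M b"
    and "\<And>x. x \<in> space M \<Longrightarrow> \<bar>f x - g x\<bar> \<le> b x"
  shows "\<bar>(\<integral>x. f x \<partial>M) - (\<integral>x. g x \<partial>M)\<bar> \<le> (\<integral>x. b x \<partial>M)"
proof -
  have "(\<integral>x. f x \<partial>M) - (\<integral>x. g x \<partial>M) = (\<integral>x. f x - g x \<partial>M)"
    using assms by simp
  also have "\<bar>\<dots>\<bar> \<le> (\<integral>x. \<bar>f x - g x\<bar> \<partial>M)"
    using integral_norm_bound[of M "\<lambda>x. f x - g x"] by simp
  also have "\<dots> \<le> (\<integral>x. b x \<partial>M)"
    using assms by (intro integral_mono integrable_abs Bochner_Integration.integrable_diff) auto
  finally show ?thesis .
qed

lemma (in prob_space) abs_integral_diff_le: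
  fixes f g :: "'a \<Rightarrow> real"
  assumes "integrable M f" "integrable M g" and "\<And>x. x \<in> space M \<Longrightarrow> \<bar>f x - g x\<bar> \<le> c"
  shows "\<bar>(\<integral>x. f x \<partial>M) - (\<integral>x. g x \<partial>M)\<bar> \<le> c"
  using abs_integral_diff_le_integral[of f g "\<lambda>_. c"] assms by (simp add: prob_space)

lemma uniformly_continuous_in_parameter:
  fixes H :: "'a::metric_space \<times> 'b::metric_space \<Rightarrow> 'c::metric_space"
  assumes "continuous_on (K \<times> S) H" "compact K" "compact S" "e > 0"
  obtains d where "d > 0"
    "\<And>s t x. s \<in> K \<Longrightarrow> t \<in> K \<Longrightarrow> dist s t < d \<Longrightarrow> x \<in> S \<Longrightarrow> dist (H (s, x)) (H (t, x)) < e"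
proof -
  have "uniformly_continuous_on (K \<times> S) H"
    using assms by (intro compact_uniformly_continuous compact_Times)
  then obtain d where "d > 0"
    "\<And>p q. p \<in> K \<times> S \<Longrightarrow> q \<in> K \<times> S \<Longrightarrow> dist q p < d \<Longrightarrow> dist (H q) (H p) < e"
    unfolding uniformly_continuous_on_def using \<open>e > 0\<close> by metis
  then show ?thesis
    using that by (simp add: dist_Pair_Pair)
qed

lemma continuous_on_section:
  assumes "continuous_on (K \<times> S) H" and "t \<in> K"
  shows "continuous_on S (\<lambda>x. H (t, x))"
  using assms by (intro continuous_on_compose2[OF assms(1)] continuous_intros) auto

lemma continuous_on_parametric_integral:
  fixes H :: "'a::metric_space \<times> 'b::metric_space \<Rightarrow> real"
  assumes "prob_space M" and sets: "sets M = sets (restrict_space borel S)"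
    and "compact K" "compact S" and cont: "continuous_on (K \<times> S) H"
  shows "continuous_on K (\<lambda>t. \<integral>x. H (t, x) \<partial>M)"
  unfolding continuous_on_iff
proof (intro ballI allI impI)
  fix t and e :: real assume t: "t \<in> K" and "0 < e"
  interpret prob_space M by fact
  have integrable_section: "integrable M (\<lambda>x. H (s, x))" if "s \<in> K" for s
    using finite_measure_axioms sets \<open>compact S\<close> continuous_on_section[OF cont that]
    by (rule integrable_continuous_on_compact)
  obtain d where "d > 0"
    and d: "\<And>s x. s \<in> K \<Longrightarrow> dist s t < d \<Longrightarrow> x \<in> S \<Longrightarrow> dist (H (s, x)) (H (t, x)) < e/2"
    using uniformly_continuous_in_parameter[OF cont \<open>compact K\<close> \<open>compact S\<close> half_gt_zero[OF \<open>0 < e\<close>]] t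
    by metis
  have "dist (\<integral>x. H (s, x) \<partial>M) (\<integral>x. H (t, x) \<partial>M) \<le> e/2" if "s \<in> K" "dist s t < d" for s
    using integrable_section[OF that(1)] integrable_section[OF t] d[OF that]
      space_eq_if_sets_restrict_borel[OF sets]
    unfolding dist_real_def by (intro abs_integral_diff_le less_imp_le) auto
  then show "\<exists>d>0. \<forall>s\<in>K. dist s t < d \<longrightarrow> dist (\<integral>x. H (s, x) \<partial>M) (\<integral>x. H (t, x) \<partial>M) < e"
    using \<open>d > 0\<close> \<open>0 < e\<close> by (smt (verit) field_sum_of_halves)
qed

lemma eq_return_if_integral_continuous_eq:
  fixes M :: "'a::metric_space measure"
  assumes "prob_space M" and sets: "sets M = sets (restrict_space borel S)" and "a \<in> S"
    and eval: "\<And>\<phi> :: 'a \<Rightarrow> real. continuous_on S \<phi> \<Longrightarrow> (\<integral>x. \<phi> x \<partial>M) = \<phi> a"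
  shows "M = return (restrict_space borel S) a"
proof -
  interpret prob_space M by fact
  have space: "space M = S"
    by (rule space_eq_if_sets_restrict_borel[OF sets])
  define \<delta> where "\<delta> x = min 1 (dist x a)" for x
  have \<delta>_cont: "continuous_on S \<delta>"
    unfolding \<delta>_def by (intro continuous_intros)
  have "integrable M \<delta>"
    using space by (intro integrable_const_bound[where B = 1] AE_I2
        borel_measurable_continuous_on_sets_restrict[OF sets \<delta>_cont]) (auto simp: \<delta>_def)
  moreover have "(\<integral>x. \<delta> x \<partial>M) = 0"
    using eval[OF \<delta>_cont] by (simp add: \<delta>_def)
  moreover have "AE x in M. 0 \<le> \<delta> x"
    by (simp add: \<delta>_def)
  ultimately have "AE x in M. \<delta> x = 0"
    using integral_nonneg_eq_0_iff_AE by blast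
  then have at_a: "AE x in M. x = a"
    by eventually_elim (simp add: \<delta>_def min_def split: if_splits)
  show ?thesis
  proof (rule measure_eqI)
    show "sets M = sets (return (restrict_space borel S) a)"
      using sets by simp
    fix A assume A: "A \<in> sets M"
    have "emeasure M A = emeasure M (if a \<in> A then space M else {})"
    proof (rule emeasure_eq_AE)
      show "AE x in M. x \<in> A \<longleftrightarrow> x \<in> (if a \<in> A then space M else {})"
        using at_a by eventually_elim (use space \<open>a \<in> S\<close> in auto)
    qed (use A in auto)
    then show "emeasure M A = emeasure (return (restrict_space borel S) a) A"
      using A sets by (simp add: emeasure_space_1)
  qed
qed

lemma integral_eq_at_global_attractor:
  fixes M :: "'a::metric_space measure" and g :: "'a \<Rightarrow> 'a" and \<phi> :: "'a \<Rightarrow> real"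
  assumes "prob_space M" and sets: "sets M = sets (restrict_space borel S)" and "compact S"
    and g_cont: "continuous_on S g" and g_maps: "g ` S \<subseteq> S"
    and attract: "\<And>x. x \<in> S \<Longrightarrow> (\<lambda>n. (g^^n) x) \<longlonglongrightarrow> a" and "a \<in> S"
    and invariant: "\<And>\<psi> :: 'a \<Rightarrow> real. continuous_on S \<psi> \<Longrightarrow> (\<integral>x. \<psi> x \<partial>M) = (\<integral>x. \<psi> (g x) \<partial>M)"
    and \<phi>_cont: "continuous_on S \<phi>"
  shows "(\<integral>x. \<phi> x \<partial>M) = \<phi> a"
proof -
  interpret prob_space M by fact
  have space: "space M = S"
    by (rule space_eq_if_sets_restrict_borel[OF sets])
  have iterate: "continuous_on S (g^^n) \<and> (g^^n) ` S \<subseteq> S" for n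
  proof (induction n)
    case (Suc n)
    then show ?case
      using continuous_on_compose2[OF g_cont, of S "g^^n"] g_maps by (auto simp: o_def)
  qed (simp add: continuous_on_id)
  have \<phi>_iterate_cont: "continuous_on S (\<lambda>x. \<phi> ((g^^n) x))" for n
    using iterate by (blast intro: continuous_on_compose2[OF \<phi>_cont])
  have orbit_average: "(\<integral>x. \<phi> x \<partial>M) = (\<integral>x. \<phi> ((g^^n) x) \<partial>M)" for n
  proof (induction n)
    case (Suc n)
    then show ?case
      using invariant[OF \<phi>_iterate_cont[of n]] by (simp add: funpow_swap1)
  qed simp
  obtain B where B: "\<And>x. x \<in> S \<Longrightarrow> norm (\<phi> x) \<le> B"
    using continuous_on_compact_bound[OF \<open>compact S\<close> \<phi>_cont] by blast
  have "(\<lambda>n. \<integral>x. \<phi> ((g^^n) x) \<partial>M) \<longlonglongrightarrow> (\<integral>x. \<phi> a \<partial>M)"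
  proof (rule integral_dominated_convergence[where w = "\<lambda>_. B"])
    show "AE x in M. (\<lambda>n. \<phi> ((g^^n) x)) \<longlonglongrightarrow> \<phi> a"
    proof (rule AE_I2)
      fix x assume "x \<in> space M"
      then have "x \<in> S" "\<And>n. (g^^n) x \<in> S"
        using space iterate by auto
      moreover have "continuous (at a within S) \<phi>"
        using \<phi>_cont \<open>a \<in> S\<close> by (simp add: continuous_on_eq_continuous_within)
      ultimately show "(\<lambda>n. \<phi> ((g^^n) x)) \<longlonglongrightarrow> \<phi> a"
        using continuous_within_tendsto_compose'[OF _ _ attract] by blast
    qed
    show "AE x in M. norm (\<phi> ((g^^n) x)) \<le> B" for n
      using B iterate space by (intro AE_I2) blast
    show "(\<lambda>x. \<phi> ((g^^n) x)) \<in> borel_measurable M" for n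
      by (rule borel_measurable_continuous_on_sets_restrict[OF sets \<phi>_iterate_cont])
  qed simp_all
  then show ?thesis
    unfolding orbit_average[symmetric] by (simp add: prob_space LIMSEQ_const_iff)
qed

lemma continuous_on_compose_family:
  assumes "continuous_on (K \<times> S) (\<lambda>(t, x). f t x)" and "\<And>t x. t \<in> K \<Longrightarrow> x \<in> S \<Longrightarrow> f t x \<in> U"
    and "continuous_on U \<phi>"
  shows "continuous_on (K \<times> S) (\<lambda>(t, x). \<phi> (f t x))"
proof -
  have "(\<lambda>(t, x). f t x) ` (K \<times> S) \<subseteq> U"
    using assms(2) by auto
  then show ?thesis
    using continuous_on_compose2[OF assms(3) assms(1)] by (simp add: case_prod_unfold)
qed

lemma deviation_from_parameter_zero_le:
  fixes H :: "real \<times> 'a::metric_space \<Rightarrow> real"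
  assumes cont: "continuous_on ({0..1} \<times> S) H" and "compact S" and "e > 0"
    and bound: "\<And>t x. t \<in> {0..1} \<Longrightarrow> x \<in> S \<Longrightarrow> \<bar>H (t, x)\<bar> \<le> B"
  obtains d where "d > 0"
    "\<And>t x. t \<in> {0..1} \<Longrightarrow> x \<in> S \<Longrightarrow> \<bar>H (t, x) - H (0, x)\<bar> \<le> e + 2 * B * min 1 (t / d)"
proof -
  obtain d where "d > 0" and d: "\<And>t x. t \<in> {0..1} \<Longrightarrow> dist t 0 < d \<Longrightarrow> x \<in> S \<Longrightarrow>
      dist (H (t, x)) (H (0, x)) < e"
  proof (rule uniformly_continuous_in_parameter[OF cont compact_Icc \<open>compact S\<close> \<open>e > 0\<close>])
    fix d assume "d > 0" and "\<And>s t x. s \<in> {0..1} \<Longrightarrow> t \<in> {0..1} \<Longrightarrow> dist s t < d \<Longrightarrow> x \<in> S \<Longrightarrow>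
      dist (H (s, x)) (H (t, x)) < (e::real)"
    then show thesis
      using that[of d] by simp
  qed
  have "\<bar>H (t, x) - H (0, x)\<bar> \<le> e + 2 * B * min 1 (t / d)" if "t \<in> {0..1}" "x \<in> S" for t x
  proof (cases "t < d")
    case True
    then have "\<bar>H (t, x) - H (0, x)\<bar> < e"
      using d[OF that(1) _ that(2)] that(1) by (simp add: dist_real_def)
    moreover have "0 \<le> B"
      using bound[OF that] by linarith
    ultimately show ?thesis
      using that(1) \<open>d > 0\<close> by (simp add: add_increasing2)
  next
    case False
    then have "min 1 (t / d) = 1"
      using \<open>d > 0\<close> by simp
    then show ?thesis
      using bound[OF that] bound[of 0 x] that \<open>e > 0\<close> by auto
  qed
  with \<open>d > 0\<close> that show ?thesis by blast
qed

lemma stationary_integral_defect_le: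
  fixes f :: "real \<Rightarrow> complex \<Rightarrow> complex" and \<phi> :: "complex \<Rightarrow> real" and \<psi> :: "real \<Rightarrow> real"
  assumes M: "prob_on_circle M" and T: "prob_on_param T" and stat: "stationary f T M"
    and f_cont: "continuous_on ({0..1} \<times> circle) (\<lambda>(t, x). f t x)"
    and f_maps: "\<And>t x. t \<in> {0..1} \<Longrightarrow> x \<in> circle \<Longrightarrow> f t x \<in> circle"
    and \<phi>_cont: "continuous_on circle \<phi>" and \<psi>_cont: "continuous_on {0..1} \<psi>"
    and close: "\<And>t x. t \<in> {0..1} \<Longrightarrow> x \<in> circle \<Longrightarrow> \<bar>\<phi> (f t x) - \<phi> (f 0 x)\<bar> \<le> \<eta> + \<psi> t"
  shows "\<bar>(\<integral>x. \<phi> x \<partial>M) - (\<integral>x. \<phi> (f 0 x) \<partial>M)\<bar> \<le> \<eta> + (\<integral>t. \<psi> t \<partial>T)"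
proof -
  interpret M: prob_space M
    using M by (simp add: prob_on_circle_def)
  interpret T: prob_space T
    using T by (simp add: prob_on_param_def)
  have M_sets: "sets M = sets circle_borel" and T_sets: "sets T = sets param_borel"
    using M T by (simp_all add: prob_on_circle_def prob_on_param_def)
  define F where "F t = (\<integral>x. \<phi> (f t x) \<partial>M)" for t
  have H_cont: "continuous_on ({0..1} \<times> circle) (\<lambda>(t, x). \<phi> (f t x))"
    by (rule continuous_on_compose_family[OF f_cont f_maps \<phi>_cont])
  have F_cont: "continuous_on {0..1} F"
    using continuous_on_parametric_integral[OF M.prob_space_axioms M_sets compact_Icc compact_sphere
        H_cont] by (simp add: F_def)
  have "\<bar>F t - F 0\<bar> \<le> \<eta> + \<psi> t" if "t \<in> {0..1}" for t
    unfolding F_def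
    using continuous_on_section[OF H_cont that] continuous_on_section[OF H_cont, of 0] close[OF that]
      space_eq_if_sets_restrict_borel[OF M_sets]
    by (intro M.abs_integral_diff_le integrable_continuous_on_compact[OF _ M_sets compact_sphere])
      (auto simp: M.finite_measure_axioms)
  then have "\<bar>(\<integral>t. F t \<partial>T) - (\<integral>t. F 0 \<partial>T)\<bar> \<le> (\<integral>t. \<eta> + \<psi> t \<partial>T)"
    using F_cont \<psi>_cont space_eq_if_sets_restrict_borel[OF T_sets]
    by (intro T.abs_integral_diff_le_integral integrable_continuous_on_compact[OF _ T_sets compact_Icc]
        continuous_intros) (auto simp: T.finite_measure_axioms)
  moreover have "(\<integral>x. \<phi> x \<partial>M) = (\<integral>t. F t \<partial>T)"
    using stat \<phi>_cont by (simp add: stationary_def F_def)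
  moreover have "integrable T \<psi>"
    using \<psi>_cont by (intro integrable_continuous_on_compact[OF _ T_sets compact_Icc])
      (simp add: T.finite_measure_axioms)
  ultimately show ?thesis
    by (simp add: F_def T.prob_space)
qed

lemma weak_star_limit_of_stationary_invariant:
  fixes f :: "real \<Rightarrow> complex \<Rightarrow> complex" and \<theta> :: "nat \<Rightarrow> real measure"
    and \<mu> :: "nat \<Rightarrow> complex measure" and \<phi> :: "complex \<Rightarrow> real"
  assumes f_cont: "continuous_on ({0..1} \<times> circle) (\<lambda>(t, x). f t x)"
    and f_maps: "\<And>t x. t \<in> {0..1} \<Longrightarrow> x \<in> circle \<Longrightarrow> f t x \<in> circle"
    and \<theta>_prob: "\<And>n. prob_on_param (\<theta> n)"
    and \<theta>_conv: "\<And>\<psi> :: real \<Rightarrow> real.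
      continuous_on {0..1} \<psi> \<Longrightarrow> (\<lambda>n. \<integral>t. \<psi> t \<partial>\<theta> n) \<longlonglongrightarrow> \<psi> 0"
    and stat: "\<forall>\<^sub>F n in sequentially. prob_on_circle (\<mu> n) \<and> stationary f (\<theta> n) (\<mu> n)"
    and conv: "weak_star_conv \<mu> \<nu>" and \<phi>_cont: "continuous_on circle \<phi>"
  shows "(\<integral>x. \<phi> x \<partial>\<nu>) = (\<integral>x. \<phi> (f 0 x) \<partial>\<nu>)"
proof -
  have H_cont: "continuous_on ({0..1} \<times> circle) (\<lambda>(t, x). \<phi> (f t x))"
    by (rule continuous_on_compose_family[OF f_cont f_maps \<phi>_cont])
  have defect_lim: "(\<lambda>n. \<bar>(\<integral>x. \<phi> x \<partial>\<mu> n) - (\<integral>x. \<phi> (f 0 x) \<partial>\<mu> n)\<bar>)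
      \<longlonglongrightarrow> \<bar>(\<integral>x. \<phi> x \<partial>\<nu>) - (\<integral>x. \<phi> (f 0 x) \<partial>\<nu>)\<bar>"
    using conv \<phi>_cont continuous_on_section[OF H_cont, of 0]
    unfolding weak_star_conv_def by (intro tendsto_intros) auto
  have "\<bar>(\<integral>x. \<phi> x \<partial>\<nu>) - (\<integral>x. \<phi> (f 0 x) \<partial>\<nu>)\<bar> \<le> e" if "e > 0" for e
  proof -
    obtain B where B: "\<And>x. x \<in> circle \<Longrightarrow> norm (\<phi> x) \<le> B"
      using continuous_on_compact_bound[OF compact_sphere \<phi>_cont] by blast
    obtain d where "d > 0" and close: "\<And>t x. t \<in> {0..1} \<Longrightarrow> x \<in> circle \<Longrightarrow>
        \<bar>\<phi> (f t x) - \<phi> (f 0 x)\<bar> \<le> e + 2 * B * min 1 (t / d)"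
    proof (rule deviation_from_parameter_zero_le[OF H_cont compact_sphere \<open>e > 0\<close>])
      show "\<bar>(\<lambda>(t, x). \<phi> (f t x)) (t, x)\<bar> \<le> B" if "t \<in> {0..1}" "x \<in> circle" for t x
        using B[OF f_maps[OF that]] by simp
    qed (use that in simp)
    define \<psi> where "\<psi> t = 2 * B * min 1 (t / d)" for t
    have \<psi>_cont: "continuous_on {0..1} \<psi>"
      unfolding \<psi>_def using \<open>d > 0\<close> by (intro continuous_intros) auto
    have "\<forall>\<^sub>F n in sequentially.
        \<bar>(\<integral>x. \<phi> x \<partial>\<mu> n) - (\<integral>x. \<phi> (f 0 x) \<partial>\<mu> n)\<bar> \<le> e + (\<integral>t. \<psi> t \<partial>\<theta> n)"
      using stat
    proof eventually_elim
      case (elim n)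
      then show ?case
        using stationary_integral_defect_le[OF _ \<theta>_prob _ f_cont f_maps \<phi>_cont \<psi>_cont] close
        by (simp add: \<psi>_def)
    qed
    moreover have "(\<lambda>n. e + (\<integral>t. \<psi> t \<partial>\<theta> n)) \<longlonglongrightarrow> e"
      using tendsto_add[OF tendsto_const \<theta>_conv[OF \<psi>_cont]] by (simp add: \<psi>_def)
    ultimately show ?thesis
      by (intro tendsto_le[OF trivial_limit_sequentially _ defect_lim])
  qed
  then have "\<bar>(\<integral>x. \<phi> x \<partial>\<nu>) - (\<integral>x. \<phi> (f 0 x) \<partial>\<nu>)\<bar> \<le> 0"
    by (rule field_le_epsilon) simp
  then show ?thesis
    by simp
qed

lemma circle_homeo_maps_circle:
  assumes "circle_homeo g" and "x \<in> circle"
  shows "g x \<in> circle"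
  using assms homeomorphism_image1 unfolding circle_homeo_def by blast

theorem theoremF:
  fixes f :: "real \<Rightarrow> complex \<Rightarrow> complex"
    and \<theta> :: "real \<Rightarrow> real measure"
    and \<mu> :: "real \<Rightarrow> complex measure"
    and \<nu> :: "complex measure"
  assumes saddle: "saddle_node (f 0)"
    and homeo: "\<forall>t\<in>{0..1}. circle_homeo (f t)"
    and family_cont: "continuous_on ({0..1} \<times> circle) (\<lambda>(t, x). f t x)"
    and theta_prob: "\<forall>\<epsilon>>0. prob_on_param (\<theta> \<epsilon>)"
    and theta_conv: "\<forall>\<psi> :: real \<Rightarrow> real. continuous_on {0..1} \<psi> \<longrightarrow>
                       ((\<lambda>\<epsilon>. \<integral>t. \<psi> t \<partial>(\<theta> \<epsilon>)) \<longlongrightarrow> \<psi> 0) (at_right 0)"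
    and mu_stat: "\<forall>\<^sub>F \<epsilon> in at_right 0. prob_on_circle (\<mu> \<epsilon>) \<and> stationary f (\<theta> \<epsilon>) (\<mu> \<epsilon>)"
    and nu_prob: "prob_on_circle \<nu>"
    and acc: "\<exists>\<epsilon>s :: nat \<Rightarrow> real. (\<forall>n. \<epsilon>s n > 0) \<and> \<epsilon>s \<longlonglongrightarrow> 0 \<and>
                weak_star_conv (\<lambda>n. \<mu> (\<epsilon>s n)) \<nu>"
  shows "\<nu> = return circle_borel 1"
proof -
  obtain \<epsilon>s where \<epsilon>s: "\<forall>n. \<epsilon>s n > 0" "\<epsilon>s \<longlonglongrightarrow> 0" "weak_star_conv (\<lambda>n. \<mu> (\<epsilon>s n)) \<nu>"
    using acc by blast
  have \<epsilon>s_at_right: "filterlim \<epsilon>s (at_right 0) sequentially"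
    using \<epsilon>s by (intro tendsto_imp_filterlim_at_right) auto
  obtain h where h: "homeomorphism circle circle (f 0) h"
    using saddle unfolding saddle_node_def circle_homeo_def by blast
  have f_maps: "\<And>t x. t \<in> {0..1} \<Longrightarrow> x \<in> circle \<Longrightarrow> f t x \<in> circle"
    using homeo circle_homeo_maps_circle by blast
  have invariant: "(\<integral>x. \<phi> x \<partial>\<nu>) = (\<integral>x. \<phi> (f 0 x) \<partial>\<nu>)"
    if "continuous_on circle \<phi>" for \<phi> :: "complex \<Rightarrow> real"
  proof (rule weak_star_limit_of_stationary_invariant[where \<theta> = "\<lambda>n. \<theta> (\<epsilon>s n)",
        OF family_cont f_maps _ _ _ \<epsilon>s(3) that])
    show "prob_on_param (\<theta> (\<epsilon>s n))" for n
      using theta_prob \<epsilon>s(1) by blast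
    show "(\<lambda>n. \<integral>t. \<psi> t \<partial>\<theta> (\<epsilon>s n)) \<longlonglongrightarrow> \<psi> 0"
      if "continuous_on {0..1} \<psi>" for \<psi> :: "real \<Rightarrow> real"
      using filterlim_compose[OF theta_conv[rule_format, OF that] \<epsilon>s_at_right] by simp
    show "\<forall>\<^sub>F n in sequentially.
        prob_on_circle (\<mu> (\<epsilon>s n)) \<and> stationary f (\<theta> (\<epsilon>s n)) (\<mu> (\<epsilon>s n))"
      using filterlim_iff[THEN iffD1, OF \<epsilon>s_at_right, rule_format, OF mu_stat] .
  qed
  have attract: "(\<lambda>n. (f 0 ^^ n) x) \<longlonglongrightarrow> 1" if "x \<in> circle" for x
    using saddle h that
    by (intro circle_orbit_tendsto_unique_fixed_point)
      (auto simp: saddle_node_def homeomorphism_def intro: inj_on_inverseI[of _ h])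
  have "(\<integral>x. \<phi> x \<partial>\<nu>) = \<phi> 1" if "continuous_on circle \<phi>" for \<phi> :: "complex \<Rightarrow> real"
    using nu_prob h attract invariant that
    by (intro integral_eq_at_global_attractor[where S = circle and g = "f 0"])
      (auto simp: prob_on_circle_def homeomorphism_def)
  then show ?thesis
    using nu_prob by (intro eq_return_if_integral_continuous_eq) (auto simp: prob_on_circle_def)
qed

end
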